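(* Let $\Sigma=\{0,1,2,3\}$ and $L=\{0^k1^l2^m3^n\mid k,l,m,n\in\mathbb N_0,\ (l\ge2\text{ and }m\ge3)\text{ or }(l\ge3\text{ and }m\ge2)\}$. Then no DACA with time complexity $3$ (i.e., accepting every word of $L$ at some step $t<3$... more precisely, every $x\in L$ of length $n$ at some step $t< T(n)$ with $T\equiv3$) accepts $L$, whereas there is a one-sided $7/8$-error PACA with time complexity $3$ that accepts $L$.
   Context: A (bounded, one-dimensional) CA has state set $Q$, boundary symbol $\$\notin Q$, local transition function $\delta\colon Q_\$\times Q\times Q_\$\to Q$; on $s\in Q^n$, $\Delta(s)=\delta(\$,s_0,s_1)\cdots\delta(s_{n-2},s_{n-1},\$)$. A DACA has input alphabet $\Sigma\subseteq Q$ and accepting states $A\subseteq Q$; it accepts $x\in\Sigma^n$ iff $\Delta^t(x)\in A^n$ for some $t$; it has time complexity $T$ if every accepted $x$ of length $n$ satisfies $\Delta^t(x)\in A^n$ for some $t<T(n)$. A PACA is like a DACA but with two local transition functions $\delta_0,\delta_1$: at each step each cell independently tosses a fair coin $c$ and updates by $\delta_c$; a computation is accepting if at some step all cells are in $A$; time complexity $T$ means every accepting computation on an input of length $n$ first reaches $A^n$ at a step $<T(n)$. For $p\in[0,1)$, a one-sided $p$-error PACA for $L$ accepts every $x\in L$ with probability $\ge1-p$ and every $x\notin L$ with probability $0$. *)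

theory Defs
  imports "HOL-Probability.Probability"
begin

text \<open>States are natural numbers drawn from a finite
  set Q; the boundary symbol is represented by None (so Q with boundary is
  Some ` Q together with None). Configurations are lists.\<close>

type_synonym ltf = "nat option \<Rightarrow> nat \<Rightarrow> nat option \<Rightarrow> nat"

definition left_nb :: "nat list \<Rightarrow> nat \<Rightarrow> nat option" where
  "left_nb s i = (if i = 0 then None else Some (s ! (i - 1)))"

definition right_nb :: "nat list \<Rightarrow> nat \<Rightarrow> nat option" where
  "right_nb s i = (if Suc i < length s then Some (s ! Suc i) else None)"

definition ca_step :: "ltf \<Rightarrow> nat list \<Rightarrow> nat list" where
  "ca_step \<delta> s = map (\<lambda>i. \<delta> (left_nb s i) (s ! i) (right_nb s i)) [0..<length s]"

definition pca_step :: "ltf \<Rightarrow> ltf \<Rightarrow> (nat \<Rightarrow> bool) \<Rightarrow> nat list \<Rightarrow> nat list" where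
  "pca_step \<delta>0 \<delta>1 c s =
     map (\<lambda>i. (if c i then \<delta>1 else \<delta>0) (left_nb s i) (s ! i) (right_nb s i)) [0..<length s]"

definition closed_ltf :: "nat set \<Rightarrow> ltf \<Rightarrow> bool" where
  "closed_ltf Q \<delta> \<longleftrightarrow> (\<forall>a\<in>insert None (Some ` Q). \<forall>b\<in>Q. \<forall>c\<in>insert None (Some ` Q). \<delta> a b c \<in> Q)"

definition Sigma13 :: "nat set" where
  "Sigma13 = {0, 1, 2, 3}"

definition input_word :: "nat list \<Rightarrow> bool" where
  "input_word x \<longleftrightarrow> x \<noteq> [] \<and> set x \<subseteq> Sigma13"

definition Lang13 :: "nat list set" where
  "Lang13 = {replicate k 0 @ replicate l 1 @ replicate m 2 @ replicate n 3 | k l m n.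
               (l \<ge> 2 \<and> m \<ge> 3) \<or> (l \<ge> 3 \<and> m \<ge> 2)}"

definition is_DACA :: "nat set \<Rightarrow> ltf \<Rightarrow> nat set \<Rightarrow> bool" where
  "is_DACA Q \<delta> A \<longleftrightarrow> finite Q \<and> Sigma13 \<subseteq> Q \<and> A \<subseteq> Q \<and> closed_ltf Q \<delta>"

definition daca_accepts :: "ltf \<Rightarrow> nat set \<Rightarrow> nat list \<Rightarrow> bool" where
  "daca_accepts \<delta> A x \<longleftrightarrow> (\<exists>t. set ((ca_step \<delta> ^^ t) x) \<subseteq> A)"

definition daca_time :: "ltf \<Rightarrow> nat set \<Rightarrow> (nat \<Rightarrow> nat) \<Rightarrow> bool" where
  "daca_time \<delta> A T \<longleftrightarrow> (\<forall>x. input_word x \<and> daca_accepts \<delta> A x \<longrightarrow>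
      (\<exists>t < T (length x). set ((ca_step \<delta> ^^ t) x) \<subseteq> A))"

definition daca_lang_is :: "ltf \<Rightarrow> nat set \<Rightarrow> nat list set \<Rightarrow> bool" where
  "daca_lang_is \<delta> A L \<longleftrightarrow> (\<forall>x. input_word x \<longrightarrow> (daca_accepts \<delta> A x \<longleftrightarrow> x \<in> L))"

definition is_PACA :: "nat set \<Rightarrow> ltf \<Rightarrow> ltf \<Rightarrow> nat set \<Rightarrow> bool" where
  "is_PACA Q \<delta>0 \<delta>1 A \<longleftrightarrow> finite Q \<and> Sigma13 \<subseteq> Q \<and> A \<subseteq> Q \<and> closed_ltf Q \<delta>0 \<and> closed_ltf Q \<delta>1"

primrec paca_run :: "ltf \<Rightarrow> ltf \<Rightarrow> (nat \<Rightarrow> nat \<Rightarrow> bool) \<Rightarrow> nat list \<Rightarrow> nat \<Rightarrow> nat list" where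
  "paca_run \<delta>0 \<delta>1 c x 0 = x"
| "paca_run \<delta>0 \<delta>1 c x (Suc t) = pca_step \<delta>0 \<delta>1 (c t) (paca_run \<delta>0 \<delta>1 c x t)"

definition paca_time :: "ltf \<Rightarrow> ltf \<Rightarrow> nat set \<Rightarrow> (nat \<Rightarrow> nat) \<Rightarrow> bool" where
  "paca_time \<delta>0 \<delta>1 A T \<longleftrightarrow> (\<forall>x c. input_word x \<and> (\<exists>t. set (paca_run \<delta>0 \<delta>1 c x t) \<subseteq> A) \<longrightarrow>
      (\<exists>t < T (length x). set (paca_run \<delta>0 \<delta>1 c x t) \<subseteq> A))"

definition pstep :: "ltf \<Rightarrow> ltf \<Rightarrow> nat list \<Rightarrow> nat list pmf" where
  "pstep \<delta>0 \<delta>1 s = map_pmf (\<lambda>c. pca_step \<delta>0 \<delta>1 c s)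
      (Pi_pmf {..<length s} False (\<lambda>_. bernoulli_pmf (1/2)))"

primrec prun :: "ltf \<Rightarrow> ltf \<Rightarrow> nat set \<Rightarrow> nat list \<Rightarrow> nat \<Rightarrow> (nat list \<times> bool) pmf" where
  "prun \<delta>0 \<delta>1 A x 0 = return_pmf (x, set x \<subseteq> A)"
| "prun \<delta>0 \<delta>1 A x (Suc t) = bind_pmf (prun \<delta>0 \<delta>1 A x t)
      (\<lambda>(s, b). map_pmf (\<lambda>s'. (s', b \<or> set s' \<subseteq> A)) (pstep \<delta>0 \<delta>1 s))"

text \<open>Acceptance probability = probability that some step is in A^n
  (the limit of the increasing probabilities of acceptance within t steps).\<close>
definition paca_acc_prob :: "ltf \<Rightarrow> ltf \<Rightarrow> nat set \<Rightarrow> nat list \<Rightarrow> real" where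
  "paca_acc_prob \<delta>0 \<delta>1 A x = (SUP t. measure_pmf.prob (prun \<delta>0 \<delta>1 A x t) {p. snd p})"

definition one_sided_error :: "ltf \<Rightarrow> ltf \<Rightarrow> nat set \<Rightarrow> real \<Rightarrow> nat list set \<Rightarrow> bool" where
  "one_sided_error \<delta>0 \<delta>1 A p L \<longleftrightarrow>
     (\<forall>x. input_word x \<and> x \<in> L \<longrightarrow> paca_acc_prob \<delta>0 \<delta>1 A x \<ge> 1 - p) \<and>
     (\<forall>x. input_word x \<and> x \<notin> L \<longrightarrow> paca_acc_prob \<delta>0 \<delta>1 A x = 0)"

end

theory Submission
  imports Defs "HOL-Library.Countable"
begin

text \<open>
  Within t steps a cell of a DACA only sees its radius-t neighbourhood. Every neighbourhood of
  radius at most 2 occurring in 1122 \<notin> L also occurs in 11222 \<in> L or in 11122 \<in> L, and at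
  radius at most 1 already in both; so a DACA accepting both of these within two steps also
  accepts 1122.

  The PACA spends its first step letting every cell record its neighbours' letters and a coin.
  In the second step each cell thereby checks its radius-2 neighbourhood, knowing also the coin
  of its left neighbour, and then accepts or rejects for good. The checks force the form
  0^k 1^l 2^m 3^n with l, m \<ge> 2, and the coin of the last 1 chooses whether l \<ge> 3 (checked by
  that cell) or m \<ge> 3 (checked by the first 2) is verified. So a word of L is accepted
  whenever this single coin is right, with probability at least 1/2, and a word outside L
  never; as all cells have halted after step 2, the time complexity is 3.
\<close>

abbreviation blocks :: "nat \<Rightarrow> nat \<Rightarrow> nat \<Rightarrow> nat \<Rightarrow> nat list" where
  "blocks k l m n \<equiv> replicate k 0 @ replicate l 1 @ replicate m 2 @ replicate n 3"

lemma blocks_in_Lang13_iff: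
  "blocks k l m n \<in> Lang13 \<longleftrightarrow> (l \<ge> 2 \<and> m \<ge> 3) \<or> (l \<ge> 3 \<and> m \<ge> 2)"
proof
  assume "blocks k l m n \<in> Lang13"
  then obtain k' l' m' n' where eq: "blocks k l m n = blocks k' l' m' n'"
    and cond: "(l' \<ge> 2 \<and> m' \<ge> 3) \<or> (l' \<ge> 3 \<and> m' \<ge> 2)"
    unfolding Lang13_def by blast
  have "length (filter ((=) v) (blocks k l m n)) = length (filter ((=) v) (blocks k' l' m' n'))" for v
    by (simp only: eq)
  from this[of 1] this[of 2] have "l = l'" "m = m'" by simp_all
  with cond show "(l \<ge> 2 \<and> m \<ge> 3) \<or> (l \<ge> 3 \<and> m \<ge> 2)" by simp
qed (auto simp: Lang13_def)

section \<open>No DACA of time complexity 3\<close>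

lemma short_words_Lang13:
  "[1,1,2,2,2] \<in> Lang13" "[1,1,1,2,2] \<in> Lang13" "[1,1,2,2] \<notin> Lang13"
  using blocks_in_Lang13_iff[of 0 2 3 0] blocks_in_Lang13_iff[of 0 3 2 0] blocks_in_Lang13_iff[of 0 2 2 0]
  by (simp_all add: numeral_eq_Suc)

lemma ca_step_4_cells:
  "ca_step \<delta> [a,b,c,d] = [\<delta> None a (Some b), \<delta> (Some a) b (Some c), \<delta> (Some b) c (Some d), \<delta> (Some c) d None]"
  by (simp add: ca_step_def left_nb_def right_nb_def upt_rec)

lemma ca_step_5_cells:
  "ca_step \<delta> [a,b,c,d,e] = [\<delta> None a (Some b), \<delta> (Some a) b (Some c), \<delta> (Some b) c (Some d),
     \<delta> (Some c) d (Some e), \<delta> (Some d) e None]"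
  by (simp add: ca_step_def left_nb_def right_nb_def upt_rec)

lemma ca_steps_1122_covered_le1:
  assumes "t \<le> 1"
  shows "set ((ca_step \<delta> ^^ t) [1,1,2,2]) \<subseteq> set ((ca_step \<delta> ^^ t) [1,1,2,2,2])"
    and "set ((ca_step \<delta> ^^ t) [1,1,2,2]) \<subseteq> set ((ca_step \<delta> ^^ t) [1,1,1,2,2])"
  using assms by (auto simp: le_Suc_eq ca_step_4_cells ca_step_5_cells)

lemma ca_steps_1122_covered_2:
  "set ((ca_step \<delta> ^^ 2) [1,1,2,2]) \<subseteq> set ((ca_step \<delta> ^^ 2) [1,1,2,2,2]) \<union> set ((ca_step \<delta> ^^ 2) [1,1,1,2,2])"
  by (simp add: numeral_2_eq_2 ca_step_4_cells ca_step_5_cells)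

theorem no_DACA_time3_Lang13:
  "\<not> (\<exists>Q \<delta> A. is_DACA Q \<delta> A \<and> daca_time \<delta> A (\<lambda>_. 3) \<and> daca_lang_is \<delta> A Lang13)"
proof
  assume "\<exists>Q \<delta> A. is_DACA Q \<delta> A \<and> daca_time \<delta> A (\<lambda>_. 3) \<and> daca_lang_is \<delta> A Lang13"
  then obtain \<delta> A where time: "daca_time \<delta> A (\<lambda>_. 3)" and lang: "daca_lang_is \<delta> A Lang13" by blast
  have words: "input_word [1,1,2,2]" "input_word [1,1,2,2,2]" "input_word [1,1,1,2,2]"
    by (auto simp: input_word_def Sigma13_def)
  have fast: "\<exists>t < 3. set ((ca_step \<delta> ^^ t) w) \<subseteq> A" if "input_word w" "w \<in> Lang13" for w
    using that lang time unfolding daca_lang_is_def daca_time_def by blast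
  obtain tz where tz: "tz < 3" "set ((ca_step \<delta> ^^ tz) [1,1,2,2,2]) \<subseteq> A"
    using fast words short_words_Lang13 by blast
  obtain ty where ty: "ty < 3" "set ((ca_step \<delta> ^^ ty) [1,1,1,2,2]) \<subseteq> A"
    using fast words short_words_Lang13 by blast
  have "\<exists>t. set ((ca_step \<delta> ^^ t) [1,1,2,2]) \<subseteq> A"
  proof (cases "tz \<le> 1 \<or> ty \<le> 1")
    case True
    then show ?thesis using tz ty ca_steps_1122_covered_le1 by blast
  next
    case False
    then have "tz = 2" "ty = 2" using tz ty by auto
    then show ?thesis using tz ty ca_steps_1122_covered_2 by blast
  qed
  then have "[1,1,2,2] \<in> Lang13"
    using lang words unfolding daca_lang_is_def daca_accepts_def by blast
  with short_words_Lang13 show False by simp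
qed

lemma length_pca_step [simp]: "length (pca_step \<delta>0 \<delta>1 c s) = length s"
  by (simp add: pca_step_def)

lemma nth_pca_step:
  "i < length s \<Longrightarrow> pca_step \<delta>0 \<delta>1 c s ! i = (if c i then \<delta>1 else \<delta>0) (left_nb s i) (s ! i) (right_nb s i)"
  by (simp add: pca_step_def)

lemma length_paca_run [simp]: "length (paca_run \<delta>0 \<delta>1 c x t) = length x"
  by (induction t) auto

lemma paca_run_cong: "(\<And>u. u < t \<Longrightarrow> c' u = c u) \<Longrightarrow> paca_run \<delta>0 \<delta>1 c' x t = paca_run \<delta>0 \<delta>1 c x t"
  by (induction t) auto

lemma prun_support:
  assumes "(s, b) \<in> set_pmf (prun \<delta>0 \<delta>1 A x t)"
  shows "\<exists>c. s = paca_run \<delta>0 \<delta>1 c x t \<and> (b \<longrightarrow> (\<exists>u\<le>t. set (paca_run \<delta>0 \<delta>1 c x u) \<subseteq> A))"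
  using assms
proof (induction t arbitrary: s b)
  case 0
  then show ?case by auto
next
  case (Suc t)
  then obtain s0 b0 where prev: "(s0, b0) \<in> set_pmf (prun \<delta>0 \<delta>1 A x t)"
    and "(s, b) \<in> set_pmf (map_pmf (\<lambda>s'. (s', b0 \<or> set s' \<subseteq> A)) (pstep \<delta>0 \<delta>1 s0))"
    by auto
  then obtain c' where s: "s = pca_step \<delta>0 \<delta>1 c' s0" and b: "b = (b0 \<or> set s \<subseteq> A)"
    unfolding pstep_def by auto
  from Suc.IH[OF prev] obtain c where c: "s0 = paca_run \<delta>0 \<delta>1 c x t"
    and b0: "b0 \<longrightarrow> (\<exists>u\<le>t. set (paca_run \<delta>0 \<delta>1 c x u) \<subseteq> A)"
    by blast
  define c'' where "c'' = c(t := c')"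
  have same: "paca_run \<delta>0 \<delta>1 c'' x u = paca_run \<delta>0 \<delta>1 c x u" if "u \<le> t" for u
    using that by (intro paca_run_cong) (auto simp: c''_def)
  have run: "s = paca_run \<delta>0 \<delta>1 c'' x (Suc t)"
    using s c same[of t] by (simp add: c''_def)
  show ?case
  proof (intro exI[of _ c''] conjI impI)
    show "s = paca_run \<delta>0 \<delta>1 c'' x (Suc t)" by (fact run)
    assume b
    then show "\<exists>u\<le>Suc t. set (paca_run \<delta>0 \<delta>1 c'' x u) \<subseteq> A"
      using b b0 same run by (metis le_SucI order_refl)
  qed
qed

lemma paca_acc_prob_eq_0:
  assumes "\<And>c t. \<not> set (paca_run \<delta>0 \<delta>1 c x t) \<subseteq> A"
  shows "paca_acc_prob \<delta>0 \<delta>1 A x = 0"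
proof -
  have "(s, True) \<notin> set_pmf (prun \<delta>0 \<delta>1 A x t)" for s t
    using prun_support[of s True] assms by blast
  then have "set_pmf (prun \<delta>0 \<delta>1 A x t) \<inter> {p. snd p} = {}" for t
    by auto
  then have "measure_pmf.prob (prun \<delta>0 \<delta>1 A x t) {p. snd p} = 0" for t
    by (simp add: measure_pmf_zero_iff)
  then show ?thesis
    by (simp add: paca_acc_prob_def)
qed

lemma prob_prun_le_paca_acc_prob:
  "measure_pmf.prob (prun \<delta>0 \<delta>1 A x t) {p. snd p} \<le> paca_acc_prob \<delta>0 \<delta>1 A x"
  unfolding paca_acc_prob_def by (rule cSUP_upper) (auto intro: bdd_aboveI2[where M = 1])

abbreviation coins :: "nat \<Rightarrow> (nat \<Rightarrow> bool) pmf" where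
  "coins n \<equiv> Pi_pmf {..<n} False (\<lambda>_. bernoulli_pmf (1/2))"

lemma prob_coin_eq: assumes "i < n" shows "measure_pmf.prob (coins n) {c. c i = v} = 1/2"
proof -
  have "measure_pmf.prob (coins n) {c. c i = v} = measure_pmf.prob (map_pmf (\<lambda>c. c i) (coins n)) {v}"
    by (simp add: vimage_def)
  also have "map_pmf (\<lambda>c. c i) (coins n) = bernoulli_pmf (1/2)"
    using assms by (subst Pi_pmf_component) (auto simp del: lessThan_iff)
  finally show ?thesis by (cases v) (simp_all add: measure_pmf_single)
qed

lemma prob_prun_2:
  assumes "\<And>c0 c1. (set x \<subseteq> A \<or> set (pca_step \<delta>0 \<delta>1 c0 x) \<subseteq> A
      \<or> set (pca_step \<delta>0 \<delta>1 c1 (pca_step \<delta>0 \<delta>1 c0 x)) \<subseteq> A) \<longleftrightarrow> G c0"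
  shows "measure_pmf.prob (prun \<delta>0 \<delta>1 A x 2) {p. snd p} = measure_pmf.prob (coins (length x)) {c. G c}"
proof -
  have "map_pmf snd (prun \<delta>0 \<delta>1 A x 2) = bind_pmf (coins (length x)) (\<lambda>c0. map_pmf (\<lambda>_. G c0) (coins (length x)))"
    using assms
    by (simp add: numeral_2_eq_2 bind_return_pmf pstep_def bind_map_pmf map_bind_pmf map_pmf_comp)
  also have "\<dots> = map_pmf G (coins (length x))"
    by (simp add: map_pmf_def)
  finally have marginal: "map_pmf snd (prun \<delta>0 \<delta>1 A x 2) = map_pmf G (coins (length x))" .
  have "measure_pmf.prob (prun \<delta>0 \<delta>1 A x 2) {p. snd p} = measure_pmf.prob (map_pmf snd (prun \<delta>0 \<delta>1 A x 2)) {True}"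
    by (simp add: vimage_def)
  also have "\<dots> = measure_pmf.prob (coins (length x)) {c. G c}"
    unfolding marginal by (simp add: vimage_def)
  finally show ?thesis .
qed

section \<open>A PACA of time complexity 3\<close>

text \<open>Clipping non-letters to the boundary code 0 keeps the state set finite; on runs from
  input words it never applies.\<close>

definition code :: "nat option \<Rightarrow> nat" where
  "code v = (case v of Some a \<Rightarrow> if a \<le> 3 then Suc a else 0 | None \<Rightarrow> 0)"

text \<open>The arguments are the codes (0 for the boundary, a + 1 for the letter a) at offsets
  -2, \<dots>, 2, the cell's own coin and the coin of its left neighbour. A true coin at the last 1
  asserts l \<ge> 3, which that cell verifies; a false one delegates m \<ge> 3 to the first 2.\<close>

definition local_check :: "nat \<Rightarrow> nat \<Rightarrow> nat \<Rightarrow> nat \<Rightarrow> nat \<Rightarrow> bool \<Rightarrow> bool \<Rightarrow> bool" where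
  "local_check ll l m r rr g gl \<longleftrightarrow>
    (m = 1 \<and> l \<le> 1 \<and> (r = 1 \<or> r = 2)) \<or>
    (m = 2 \<and> l \<le> 2 \<and> (r = 2 \<or> r = 3) \<and> (r = 3 \<longrightarrow> l = 2 \<and> rr = 3 \<and> (g \<longrightarrow> ll = 2))) \<or>
    (m = 3 \<and> (l = 2 \<or> l = 3) \<and> (r = 0 \<or> r = 3 \<or> r = 4) \<and> (l = 2 \<longrightarrow> ll = 2 \<and> r = 3 \<and> (\<not> gl \<longrightarrow> rr = 3))) \<or>
    (m = 4 \<and> (l = 3 \<or> l = 4) \<and> (r = 0 \<or> r = 4))"

datatype view = View (lcode: nat) (letter: nat) (rcode: nat) (coin: bool)

instance view :: countable
  by countable_datatype

text \<open>States 0--3 are the letters, 4 accepts, 5 rejects, and states from 6 on encode views.\<close>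

definition view_state :: "view \<Rightarrow> nat" where
  "view_state v = 6 + to_nat v"

definition state_view :: "nat \<Rightarrow> view" where
  "state_view s = from_nat (s - 6)"

lemma state_view_state [simp]: "state_view (view_state v) = v"
  by (simp add: state_view_def view_state_def)

definition nb_view :: "nat option \<Rightarrow> view" where
  "nb_view s = (case s of None \<Rightarrow> View 0 0 0 False | Some s' \<Rightarrow> state_view s')"

definition view_check :: "nat option \<Rightarrow> nat \<Rightarrow> nat option \<Rightarrow> bool" where
  "view_check l s r \<longleftrightarrow> local_check (lcode (nb_view l)) (lcode (state_view s)) (Suc (letter (state_view s)))
     (rcode (state_view s)) (rcode (nb_view r)) (coin (state_view s)) (coin (nb_view l))"

definition \<delta>13 :: "bool \<Rightarrow> ltf" where
  "\<delta>13 g l s r = (if s \<le> 3 then view_state (View (code l) s (code r) g)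
     else if 6 \<le> s \<and> view_check l s r then 4 else 5)"

definition Q13 :: "nat set" where
  "Q13 = {..5} \<union> (\<lambda>(a, b, c, g). view_state (View a b c g)) ` ({..4} \<times> {..3} \<times> {..4} \<times> UNIV)"

lemma is_PACA_\<delta>13: "is_PACA Q13 (\<delta>13 False) (\<delta>13 True) {4}"
proof -
  have code_le: "code v \<le> 4" for v
    by (simp add: code_def split: option.split)
  have "\<delta>13 g l s r \<in> Q13" if "s \<le> 3" for g l s r
  proof -
    have "(code l, s, code r, g) \<in> {..4} \<times> {..3} \<times> {..4} \<times> (UNIV :: bool set)"
      using that code_le by simp
    then have "view_state (View (code l) s (code r) g)
        \<in> (\<lambda>(a, b, c, g). view_state (View a b c g)) ` ({..4} \<times> {..3} \<times> {..4} \<times> UNIV)"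
      by (rule rev_image_eqI) simp
    then show ?thesis
      using that unfolding \<delta>13_def Q13_def by simp
  qed
  moreover have "\<delta>13 g l s r \<in> Q13" if "\<not> s \<le> 3" for g l s r
    using that by (simp add: \<delta>13_def Q13_def)
  ultimately have "\<delta>13 g l s r \<in> Q13" for g l s r
    by blast
  moreover have "finite Q13" "Sigma13 \<subseteq> Q13" "{4} \<subseteq> Q13"
    by (auto simp: Q13_def Sigma13_def)
  ultimately show ?thesis
    by (simp add: is_PACA_def closed_ltf_def)
qed

definition window :: "nat list \<Rightarrow> int \<Rightarrow> nat" where
  "window x j = (if 0 \<le> j \<and> j < int (length x) then Suc (x ! nat j) else 0)"

definition cell_check :: "nat list \<Rightarrow> (nat \<Rightarrow> bool) \<Rightarrow> nat \<Rightarrow> bool" where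
  "cell_check x c i \<longleftrightarrow> local_check (window x (int i - 2)) (window x (int i - 1)) (window x (int i))
     (window x (int i + 1)) (window x (int i + 2)) (c i) (0 < i \<and> c (i - 1))"

abbreviation step13 :: "(nat \<Rightarrow> bool) \<Rightarrow> nat list \<Rightarrow> nat list" where
  "step13 \<equiv> pca_step (\<delta>13 False) (\<delta>13 True)"

abbreviation run13 :: "(nat \<Rightarrow> nat \<Rightarrow> bool) \<Rightarrow> nat list \<Rightarrow> nat \<Rightarrow> nat list" where
  "run13 \<equiv> paca_run (\<delta>13 False) (\<delta>13 True)"

lemma input_word_nth_le: "input_word x \<Longrightarrow> i < length x \<Longrightarrow> x ! i \<le> 3"
  unfolding input_word_def Sigma13_def using nth_mem by fastforce

lemma nth_step13: "i < length s \<Longrightarrow> step13 c s ! i = \<delta>13 (c i) (left_nb s i) (s ! i) (right_nb s i)"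
  by (simp add: nth_pca_step if_distrib[of "\<lambda>\<delta>. \<delta> _ _ _"])

lemma nth_step13_input:
  assumes "input_word x" "i < length x"
  shows "step13 c x ! i = view_state (View (window x (int i - 1)) (x ! i) (window x (int i + 1)) (c i))"
proof -
  have "code (left_nb x i) = window x (int i - 1)" "code (right_nb x i) = window x (int i + 1)"
    using assms input_word_nth_le[OF assms(1)]
    by (auto simp: code_def left_nb_def right_nb_def window_def nat_diff_distrib nat_add_distrib)
  then show ?thesis
    using assms input_word_nth_le[OF assms] by (simp add: nth_step13 \<delta>13_def)
qed

lemma nth_step13_step13:
  assumes x: "input_word x" and i: "i < length x"
  shows "step13 c1 (step13 c0 x) ! i = (if cell_check x c0 i then 4 else 5)"
proof -
  let ?s = "step13 c0 x"
  have left: "lcode (nb_view (left_nb ?s i)) = window x (int i - 2)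
      \<and> coin (nb_view (left_nb ?s i)) = (0 < i \<and> c0 (i - 1))"
  proof (cases "i = 0")
    case True
    then show ?thesis by (simp add: left_nb_def nb_view_def window_def)
  next
    case False
    then have "int (i - 1) - 1 = int i - 2" by simp
    with False show ?thesis
      using nth_step13_input[OF x, of "i - 1"] i by (simp add: left_nb_def nb_view_def)
  qed
  have right: "rcode (nb_view (right_nb ?s i)) = window x (int i + 2)"
  proof (cases "Suc i < length x")
    case True
    then show ?thesis
      using nth_step13_input[OF x, of "Suc i"] by (simp add: right_nb_def nb_view_def add.commute)
  next
    case False
    then show ?thesis by (simp add: right_nb_def nb_view_def window_def)
  qed
  have "Suc (x ! i) = window x (int i)"
    using i by (simp add: window_def)
  then have "view_check (left_nb ?s i) (?s ! i) (right_nb ?s i) = cell_check x c0 i"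
    using nth_step13_input[OF x i] left right by (simp add: view_check_def cell_check_def)
  then show ?thesis
    using nth_step13_input[OF x i] i by (simp add: nth_step13 \<delta>13_def view_state_def)
qed

lemma run13_2:
  "input_word x \<Longrightarrow> i < length x \<Longrightarrow> run13 c x 2 ! i = (if cell_check x (c 0) i then 4 else 5)"
  by (simp add: numeral_2_eq_2 nth_step13_step13)

lemma step13_halted: "set s \<subseteq> {4, 5} \<Longrightarrow> set (step13 c s) \<subseteq> {5}"
  by (auto simp: set_conv_nth nth_step13 \<delta>13_def)

lemma run13_halted:
  assumes "input_word x"
  shows "set (run13 c x (t + 3)) \<subseteq> {5}"
proof (induction t)
  case 0
  have "set (run13 c x 2) \<subseteq> {4, 5}"
    using run13_2[OF assms] by (auto simp: set_conv_nth)
  then show ?case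
    using step13_halted by (simp add: numeral_3_eq_3 numeral_2_eq_2)
next
  case (Suc t)
  have "run13 c x (Suc t + 3) = step13 (c (t + 3)) (run13 c x (t + 3))"
    by (simp only: add_Suc paca_run.simps)
  with Suc show ?case
    using step13_halted by auto
qed

lemma run13_accepting_iff:
  assumes x: "input_word x"
  shows "set (run13 c x t) \<subseteq> {4} \<longleftrightarrow> t = 2 \<and> (\<forall>i<length x. cell_check x (c 0) i)"
proof -
  have nonempty: "0 < length x"
    using x by (simp add: input_word_def)
  have "t = 0 \<or> t = 1 \<or> t = 2 \<or> (\<exists>u. t = u + 3)"
    by presburger
  then consider "t = 0" | "t = 1" | "t = 2" | u where "t = u + 3"
    by blast
  then show ?thesis
  proof cases
    case 1
    then show ?thesis
      using input_word_nth_le[OF x nonempty] nth_mem[OF nonempty] by auto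
  next
    case 2
    then show ?thesis
      using nth_step13_input[OF x nonempty, of "c 0"] nth_mem[of 0 "step13 (c 0) x"] nonempty
      by (auto simp: view_state_def)
  next
    case 3
    have "set (run13 c x 2) \<subseteq> {4} \<longleftrightarrow> (\<forall>i<length x. run13 c x 2 ! i = 4)"
      by (auto simp: set_conv_nth)
    with 3 show ?thesis
      using run13_2[OF x] by auto
  next
    case 4
    have first: "run13 c x t ! 0 \<in> set (run13 c x t)"
      using nonempty by simp
    with 4 run13_halted[OF x, of c u] have "run13 c x t ! 0 = 5"
      by blast
    with 4 first show ?thesis
      by auto
  qed
qed

section \<open>The local checks characterise the language\<close>

lemma window_blocks:
  "window (blocks k l m n) j =
    (if j < 0 then 0 else if j < int k then 1 else if j < int (k + l) then 2
     else if j < int (k + l + m) then 3 else if j < int (k + l + m + n) then 4 else 0)"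
proof (cases "0 \<le> j \<and> j < int (k + l + m + n)")
  case True
  then have "nat j < k + l + m + n" by linarith
  then have "blocks k l m n ! nat j =
      (if nat j < k then 0 else if nat j < k + l then 1 else if nat j < k + l + m then 2 else 3)"
    by (auto simp: nth_append)
  with True show ?thesis
    unfolding window_def by auto
next
  case False
  then show ?thesis
    unfolding window_def by auto
qed

lemma cell_check_blocks_good_guess:
  assumes lm: "(l \<ge> 2 \<and> m \<ge> 3) \<or> (l \<ge> 3 \<and> m \<ge> 2)"
    and guess: "c (k + l - 1) \<longleftrightarrow> l \<ge> 3"
    and i: "i < length (blocks k l m n)"
  shows "cell_check (blocks k l m n) c i"
proof -
  define g gl where "g = c i" and "gl = (0 < i \<and> c (i - 1))"
  have "i = k + l - 1 \<Longrightarrow> g = (l \<ge> 3)" "i = k + l \<Longrightarrow> gl = (l \<ge> 3)"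
    using guess lm by (auto simp: g_def gl_def)
  with lm i have "local_check (window (blocks k l m n) (int i - 2)) (window (blocks k l m n) (int i - 1))
      (window (blocks k l m n) (int i)) (window (blocks k l m n) (int i + 1))
      (window (blocks k l m n) (int i + 2)) g gl"
    unfolding window_blocks local_check_def by auto
  then show ?thesis
    unfolding cell_check_def g_def gl_def .
qed

lemma sorted_blocks:
  assumes "sorted x" "set x \<subseteq> {0, 1, 2, 3}"
  shows "\<exists>k l m n. x = blocks k l m n"
  using assms
proof (induction x)
  case Nil
  then show ?case by (intro exI[of _ 0]) simp
next
  case (Cons a xs)
  then obtain k l m n where xs: "xs = blocks k l m n" by auto
  have le: "\<forall>y\<in>set xs. a \<le> y" using Cons.prems by simp
  have "a = 0 \<or> a = 1 \<or> a = 2 \<or> a = 3" using Cons.prems by auto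
  then show ?case
  proof (elim disjE)
    assume "a = 0"
    then show ?thesis using xs by (intro exI[of _ "Suc k"] exI[of _ l] exI[of _ m] exI[of _ n]) simp
  next
    assume a: "a = 1"
    then have "k = 0" using le xs by (cases k) auto
    then show ?thesis using xs a by (intro exI[of _ 0] exI[of _ "Suc l"] exI[of _ m] exI[of _ n]) simp
  next
    assume a: "a = 2"
    then have "k = 0" "l = 0" using le xs by (cases k; cases l; auto)+
    then show ?thesis using xs a by (intro exI[of _ 0] exI[of _ 0] exI[of _ "Suc m"] exI[of _ n]) simp
  next
    assume a: "a = 3"
    then have "k = 0" "l = 0" "m = 0" using le xs by (cases k; cases l; cases m; auto)+
    then show ?thesis using xs a by (intro exI[of _ 0] exI[of _ 0] exI[of _ 0] exI[of _ "Suc n"]) simp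
  qed
qed

lemma cell_checks_sorted:
  assumes "\<And>i. i < length x \<Longrightarrow> cell_check x c i"
  shows "sorted x"
  unfolding sorted_iff_nth_Suc
proof (intro allI impI)
  fix i assume i: "Suc i < length x"
  then have "window x (int i + 1) = 0 \<or> window x (int i) \<le> window x (int i + 1)"
    using assms[of i] unfolding cell_check_def local_check_def by auto
  moreover have "window x (int i + 1) = Suc (x ! Suc i)" "window x (int i) = Suc (x ! i)"
    using i unfolding window_def by (auto simp: nat_add_distrib)
  ultimately show "x ! i \<le> x ! Suc i" by simp
qed

lemma cell_checks_blocks_has_one:
  assumes ne: "0 < k + l + m + n"
    and checks: "\<And>i. i < k + l + m + n \<Longrightarrow> cell_check (blocks k l m n) c i"
  shows "l \<ge> 1"
proof (rule ccontr)
  assume "\<not> l \<ge> 1"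
  then have l: "l = 0" by simp
  show False
  proof (cases "k = 0")
    case True
    then show False
      using checks[OF ne] l ne unfolding cell_check_def local_check_def window_blocks
      by (auto split: if_splits)
  next
    case False
    then have "int (k - 1) - 1 = int k - 2" "int (k - 1) = int k - 1" "int (k - 1) + 1 = int k"
      "int (k - 1) + 2 = int k + 1" by auto
    with checks[of "k - 1"] False l show False
      unfolding cell_check_def local_check_def window_blocks by (auto split: if_splits)
  qed
qed

lemma local_check_letter1:
  "local_check ll l 2 r rr g gl \<Longrightarrow> (r = 2 \<or> r = 3) \<and> (r = 3 \<longrightarrow> l = 2 \<and> rr = 3 \<and> (g \<longrightarrow> ll = 2))"
  unfolding local_check_def by auto

lemma local_check_letter2: "local_check ll 2 3 r rr g gl \<Longrightarrow> \<not> gl \<Longrightarrow> rr = 3"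
  unfolding local_check_def by auto

lemma cell_checks_blocks:
  assumes ne: "0 < k + l + m + n"
    and checks: "\<And>i. i < k + l + m + n \<Longrightarrow> cell_check (blocks k l m n) c i"
  shows "(l \<ge> 2 \<and> m \<ge> 3) \<or> (l \<ge> 3 \<and> m \<ge> 2)"
proof -
  let ?w = "window (blocks k l m n)"
  have l: "l \<ge> 1" by (rule cell_checks_blocks_has_one[OF ne checks])
  then have "?w (int (k + l - 1)) = 2" "?w (int (k + l - 1) + 1) \<noteq> 2"
    unfolding window_blocks by auto
  then have "?w (int (k + l - 1) + 1) = 3 \<and> ?w (int (k + l - 1) - 1) = 2 \<and> ?w (int (k + l - 1) + 2) = 3
      \<and> (c (k + l - 1) \<longrightarrow> ?w (int (k + l - 1) - 2) = 2)"
    using local_check_letter1 checks[of "k + l - 1"] l unfolding cell_check_def by fastforce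
  then have first_two: "m \<ge> 1" and l_m: "l \<ge> 2" "m \<ge> 2" "c (k + l - 1) \<Longrightarrow> l \<ge> 3"
    using l unfolding window_blocks by (auto split: if_splits)
  then have "?w (int (k + l)) = 3" "?w (int (k + l) - 1) = 2"
    unfolding window_blocks by auto
  then have "\<not> c (k + l - 1) \<Longrightarrow> ?w (int (k + l) + 2) = 3"
    using local_check_letter2 checks[of "k + l"] l first_two unfolding cell_check_def by fastforce
  then have "\<not> c (k + l - 1) \<Longrightarrow> m \<ge> 3"
    unfolding window_blocks by (auto split: if_splits)
  with l_m show ?thesis by auto
qed

lemma cell_checks_imp_Lang13:
  assumes x: "input_word x" and checks: "\<And>i. i < length x \<Longrightarrow> cell_check x c i"
  shows "x \<in> Lang13"
proof -
  have "set x \<subseteq> {0, 1, 2, 3}"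
    using x by (simp add: input_word_def Sigma13_def)
  then obtain k l m n where blocks: "x = blocks k l m n"
    using sorted_blocks[OF cell_checks_sorted[OF checks]] by blast
  have "0 < k + l + m + n"
    using x unfolding blocks input_word_def by simp
  moreover have "cell_check (blocks k l m n) c i" if "i < k + l + m + n" for i
    using checks[of i] that unfolding blocks by simp
  ultimately have "(l \<ge> 2 \<and> m \<ge> 3) \<or> (l \<ge> 3 \<and> m \<ge> 2)"
    by (rule cell_checks_blocks)
  then show ?thesis
    unfolding blocks blocks_in_Lang13_iff .
qed

lemma paca13_time: "paca_time (\<delta>13 False) (\<delta>13 True) {4} (\<lambda>_. 3)"
  unfolding paca_time_def
proof (intro allI impI)
  fix x c
  assume "input_word x \<and> (\<exists>t. set (run13 c x t) \<subseteq> {4})"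
  then obtain t where "input_word x" "set (run13 c x t) \<subseteq> {4}"
    by blast
  with run13_accepting_iff have "t = 2" "set (run13 c x t) \<subseteq> {4}"
    by blast+
  then show "\<exists>t<3. set (run13 c x t) \<subseteq> {4}"
    by (intro exI[of _ 2]) simp
qed

lemma paca13_accepts_by_first_coins:
  assumes x: "input_word x"
  shows "(set x \<subseteq> {4} \<or> set (step13 c0 x) \<subseteq> {4} \<or> set (step13 c1 (step13 c0 x)) \<subseteq> {4})
    \<longleftrightarrow> (\<forall>i<length x. cell_check x c0 i)"
proof -
  define c where "c t = (if t = 0 then c0 else c1)" for t :: nat
  have "set (run13 c x t) \<subseteq> {4} \<longleftrightarrow> t = 2 \<and> (\<forall>i<length x. cell_check x c0 i)" for t
    using run13_accepting_iff[OF x, of c t] by (simp add: c_def)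
  from this[of 0] this[of 1] this[of 2] show ?thesis
    by (simp add: c_def numeral_2_eq_2)
qed

lemma paca13_member_prob:
  assumes x: "input_word x" and L: "x \<in> Lang13"
  shows "paca_acc_prob (\<delta>13 False) (\<delta>13 True) {4} x \<ge> 1/2"
proof -
  obtain k l m n where blocks: "x = blocks k l m n" and lm: "(l \<ge> 2 \<and> m \<ge> 3) \<or> (l \<ge> 3 \<and> m \<ge> 2)"
    using L unfolding Lang13_def by blast
  have i: "k + l - 1 < length x"
    using blocks lm by auto
  have "1/2 = measure_pmf.prob (coins (length x)) {c. c (k + l - 1) = (l \<ge> 3)}"
    using prob_coin_eq[OF i] by simp
  also have "\<dots> \<le> measure_pmf.prob (coins (length x)) {c. \<forall>i<length x. cell_check x c i}"
    using cell_check_blocks_good_guess[OF lm] blocks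
    by (intro measure_pmf.finite_measure_mono) auto
  also have "\<dots> = measure_pmf.prob (prun (\<delta>13 False) (\<delta>13 True) {4} x 2) {p. snd p}"
    by (rule prob_prun_2[symmetric]) (rule paca13_accepts_by_first_coins[OF x])
  also have "\<dots> \<le> paca_acc_prob (\<delta>13 False) (\<delta>13 True) {4} x"
    by (rule prob_prun_le_paca_acc_prob)
  finally show ?thesis .
qed

lemma paca13_nonmember_prob:
  assumes "input_word x" "x \<notin> Lang13"
  shows "paca_acc_prob (\<delta>13 False) (\<delta>13 True) {4} x = 0"
proof (rule paca_acc_prob_eq_0)
  fix c t
  show "\<not> set (run13 c x t) \<subseteq> {4}"
    using assms cell_checks_imp_Lang13[of x "c 0"] run13_accepting_iff[of x c t] by blast
qed

theorem PACA_time3_Lang13: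
  "\<exists>Q \<delta>0 \<delta>1 A. is_PACA Q \<delta>0 \<delta>1 A \<and> paca_time \<delta>0 \<delta>1 A (\<lambda>_. 3) \<and> one_sided_error \<delta>0 \<delta>1 A (7/8) Lang13"
proof (intro exI conjI)
  show "is_PACA Q13 (\<delta>13 False) (\<delta>13 True) {4}" by (fact is_PACA_\<delta>13)
  show "paca_time (\<delta>13 False) (\<delta>13 True) {4} (\<lambda>_. 3)" by (fact paca13_time)
  show "one_sided_error (\<delta>13 False) (\<delta>13 True) {4} (7/8) Lang13"
    unfolding one_sided_error_def
  proof (intro conjI allI impI)
    fix x
    assume "input_word x \<and> x \<in> Lang13"
    then show "paca_acc_prob (\<delta>13 False) (\<delta>13 True) {4} x \<ge> 1 - 7/8"
      using paca13_member_prob by fastforce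
  qed (simp add: paca13_nonmember_prob)
qed

theorem mainTheorem13:
  shows "(\<not> (\<exists>Q \<delta> A. is_DACA Q \<delta> A \<and> daca_time \<delta> A (\<lambda>_. 3) \<and> daca_lang_is \<delta> A Lang13)) \<and>
         (\<exists>Q \<delta>0 \<delta>1 A. is_PACA Q \<delta>0 \<delta>1 A \<and> paca_time \<delta>0 \<delta>1 A (\<lambda>_. 3) \<and>
            one_sided_error \<delta>0 \<delta>1 A (7/8) Lang13)"
  using no_DACA_time3_Lang13 PACA_time3_Lang13 by blast

end
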